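(* Consider the averaged buck-boost converter $-L\dot I=(1-u)V-uV_s$, $C\dot V=(1-u)I-GV$ with scalar constants $L>0$, $C>0$, $G\ge0$, $V_s\in\mathbb{R}$, extended by $\dot u=\upsilon$. Then this system is passive with respect to the storage function $S=\tfrac12L\dot I^2+\tfrac12C\dot V^2$ and the port-variables $\dot u$ and $y=\dot IV-\dot VI+V_s\dot I$, i.e. $\dot S\le\dot u\,y$.
   Context: $I$ is the inductor current, $V$ the capacitor voltage, $u\in[0,1]$ the duty cycle (averaged model). *)

theory Defs
  imports "HOL-Analysis.Analysis"
begin

end

theory Submission
  imports Defs
begin

text \<open>Differentiating the two state equations expresses \<open>L I''\<close> and \<open>C V''\<close> through
  \<open>u'\<close>, \<open>I'\<close>, \<open>V'\<close>. Substituting them into \<open>S' = L I' I'' + C V' V''\<close>, the terms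
  \<open>(1 - u) I' V'\<close> coming from the switched interconnection cancel, leaving
  \<open>S' = u' y - G V'\<^sup>2 \<le> u' y\<close>.\<close>

lemma deriv_deriv_of_ode:
  fixes f g :: "real \<Rightarrow> real"
  assumes ode: "\<And>s. c * deriv f s = g s"
    and "deriv f differentiable at t"
    and "(g has_real_derivative g') (at t)"
  shows "c * deriv (deriv f) t = g'"
proof -
  have "((\<lambda>s. c * deriv f s) has_real_derivative c * deriv (deriv f) t) (at t)"
    using assms(2) by (auto intro!: derivative_eq_intros simp: DERIV_deriv_iff_real_differentiable)
  moreover have "(\<lambda>s. c * deriv f s) = g"
    using ode by auto
  ultimately show ?thesis
    using assms(3) DERIV_unique by metis
qed

lemma buck_boost_power_balance:
  fixes L C G Vs I V u I1 V1 u1 I2 V2 :: real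
  assumes "- L * I2 = - u1 * V + (1 - u) * V1 - u1 * Vs"
    and "C * V2 = - u1 * I + (1 - u) * I1 - G * V1"
  shows "I1 * (L * I2) + V1 * (C * V2) = u1 * (I1 * V - V1 * I + Vs * I1) - G * V1\<^sup>2"
proof -
  have LI2: "L * I2 = u1 * V + u1 * Vs - (1 - u) * V1"
    using assms(1) by linarith
  show ?thesis
    unfolding LI2 assms(2) by (simp add: algebra_simps power2_eq_square)
qed

theorem lemma5:
  fixes L C G Vs :: real and I V u :: "real \<Rightarrow> real" and t :: real
  assumes L_pos: "L > 0" and C_pos: "C > 0" and G_nonneg: "G \<ge> 0"
    and I_diff: "\<forall>s. I differentiable at s"
    and I'_diff: "\<forall>s. deriv I differentiable at s"
    and V_diff: "\<forall>s. V differentiable at s"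
    and V'_diff: "\<forall>s. deriv V differentiable at s"
    and u_diff: "\<forall>s. u differentiable at s"
    and u_range: "\<forall>s. 0 \<le> u s \<and> u s \<le> 1"
    and eqI: "\<forall>s. - L * deriv I s = (1 - u s) * V s - u s * Vs"
    and eqV: "\<forall>s. C * deriv V s = (1 - u s) * I s - G * V s"
  shows "(\<lambda>s. L * (deriv I s)^2 / 2 + C * (deriv V s)^2 / 2) differentiable at t
    \<and> deriv (\<lambda>s. L * (deriv I s)^2 / 2 + C * (deriv V s)^2 / 2) t
        \<le> deriv u t * (deriv I t * V t - deriv V t * I t + Vs * deriv I t)"
proof -
  have has_deriv: "\<And>f. f differentiable at t \<Longrightarrow> (f has_real_derivative deriv f t) (at t)"
    by (simp add: DERIV_deriv_iff_real_differentiable)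
  note derivs = has_deriv[OF I_diff[rule_format]] has_deriv[OF V_diff[rule_format]]
    has_deriv[OF u_diff[rule_format]] has_deriv[OF I'_diff[rule_format]]
    has_deriv[OF V'_diff[rule_format]]
  have I2: "- L * deriv (deriv I) t = - deriv u t * V t + (1 - u t) * deriv V t - deriv u t * Vs"
    using eqI I'_diff by (intro deriv_deriv_of_ode) (auto intro!: derivative_eq_intros derivs)
  have V2: "C * deriv (deriv V) t = - deriv u t * I t + (1 - u t) * deriv I t - G * deriv V t"
    using eqV V'_diff by (intro deriv_deriv_of_ode) (auto intro!: derivative_eq_intros derivs)
  have S': "((\<lambda>s. L * (deriv I s)^2 / 2 + C * (deriv V s)^2 / 2) has_real_derivative
      deriv I t * (L * deriv (deriv I) t) + deriv V t * (C * deriv (deriv V) t)) (at t)"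
    by (auto intro!: derivative_eq_intros derivs simp: algebra_simps)
  show ?thesis
    using buck_boost_power_balance[OF I2 V2] G_nonneg DERIV_imp_deriv[OF S'] S'
    by (auto simp: real_differentiable_def)
qed

end
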